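(* (i) Let $d\ge0$ be an integer and let $p$ be the real polynomial of degree at most $d$ minimizing $$\int_0^1\bigl(1-q(z)z\bigr)^2\,dz$$ over all real polynomials $q$ of degree at most $d$. Then $p(z)>0$ for all $z\in(0,1]$. (ii) Let $d\ge0$ be an integer and $0<\mu<1$, and let $T_{d+1}$ be the Chebyshev polynomial of the first kind of degree $d+1$. Define $$r(z)=\frac{T_{d+1}\!\left(\frac{1+\mu-2z}{1-\mu}\right)}{T_{d+1}\!\left(\frac{1+\mu}{1-\mu}\right)},\qquad p(z)=\frac{1-r(z)}{z}.$$ Then $p$ is a polynomial of degree $d$ and $p(z)>0$ for all $z\in(0,1]$.
   Context: The Chebyshev polynomial of the first kind $T_k$ is the polynomial satisfying $T_k(\cos\theta)=\cos(k\theta)$. *)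

theory Defs
  imports "HOL-Analysis.Analysis" "HOL-Computational_Algebra.Polynomial"
begin

definition chebyshev_T :: "nat \<Rightarrow> real poly" where
  "chebyshev_T k = (THE p. \<forall>\<theta>::real. poly p (cos \<theta>) = cos (real k * \<theta>))"

definition ls_obj :: "real poly \<Rightarrow> real" where
  "ls_obj q = integral {0..1} (\<lambda>z. (1 - poly q z * z)\<^sup>2)"

end

theory Submission
  imports Defs
begin

text \<open>
  (i) Writing \<open>e(z) = 1 - z p(z)\<close>, the polynomial \<open>e\<close> minimises \<open>\<integral>\<^sub>0\<^sup>1 g\<^sup>2\<close> among all
  \<open>g\<close> of degree \<open>\<le> d + 1\<close> with \<open>g(0) = 1\<close>, and \<open>p(z) > 0\<close> means \<open>e(z) < 1\<close>.
  If \<open>a = e(z) \<ge> 1\<close> for some \<open>0 < z \<le> 1\<close>, cut \<open>[0,1]\<close> at \<open>z\<close> and rescale both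
  pieces affinely to \<open>[0,1]\<close> so that \<open>z\<close> goes to \<open>0\<close>. Both rescaled polynomials take
  the value \<open>a\<close> at \<open>0\<close>, so by minimality each has squared norm \<open>\<ge> a\<^sup>2\<close> times that of
  \<open>e\<close>, while their norms average to that of \<open>e\<close>. Hence \<open>a = 1\<close> and, by uniqueness of
  the minimiser, \<open>e\<close> is invariant under the affine map \<open>t \<mapsto> z(1 - t)\<close>, which is
  impossible.

  (ii) With \<open>x = cosh s\<close>, \<open>T\<^sub>n(x) = cosh (n s)\<close>, so \<open>T\<^sub>n\<close> is bounded by \<open>1\<close> on
  \<open>[-1,1]\<close> and strictly increasing beyond; hence \<open>r(z) < 1 = r(0)\<close> on \<open>(0,1]\<close>.
\<close>

lemma poly_eq_if_eq_on_interval: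
  fixes p q :: "real poly"
  assumes "a < b" and "\<And>x. x \<in> {a..b} \<Longrightarrow> poly p x = poly q x"
  shows "p = q"
proof (rule ccontr)
  assume "p \<noteq> q"
  then have "finite {x. poly (p - q) x = 0}"
    by (intro poly_roots_finite) simp
  moreover have "{a..b} \<subseteq> {x. poly (p - q) x = 0}"
    using assms(2) by auto
  ultimately show False
    using assms(1) infinite_Icc finite_subset by blast
qed

subsection \<open>Chebyshev polynomials\<close>

fun chebyshev_T_rec :: "nat \<Rightarrow> real poly" where
  "chebyshev_T_rec 0 = 1"
| "chebyshev_T_rec (Suc 0) = [:0, 1:]"
| "chebyshev_T_rec (Suc (Suc n)) = smult 2 (pCons 0 (chebyshev_T_rec (Suc n))) - chebyshev_T_rec n"

lemma poly_chebyshev_T_rec_cos: "poly (chebyshev_T_rec n) (cos t) = cos (real n * t)"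
proof (induction n rule: chebyshev_T_rec.induct)
  case (3 n)
  have "cos (real (Suc (Suc n)) * t) = cos ((real n + 1) * t + t)"
    by (simp add: algebra_simps)
  also have "\<dots> = 2 * cos t * cos ((real n + 1) * t) - cos ((real n + 1) * t - t)"
    unfolding cos_add cos_diff by (simp add: algebra_simps)
  also have "(real n + 1) * t - t = real n * t"
    by (simp add: algebra_simps)
  finally show ?case
    using 3 by (simp add: algebra_simps)
qed auto

lemma poly_chebyshev_T_rec_cosh: "poly (chebyshev_T_rec n) (cosh t) = cosh (real n * t)"
proof (induction n rule: chebyshev_T_rec.induct)
  case (3 n)
  have "cosh (real (Suc (Suc n)) * t) = cosh ((real n + 1) * t + t)"
    by (simp add: algebra_simps)
  also have "\<dots> = 2 * cosh t * cosh ((real n + 1) * t) - cosh ((real n + 1) * t + (- t))"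
    unfolding cosh_add by (simp add: algebra_simps)
  also have "(real n + 1) * t + (- t) = real n * t"
    by (simp add: algebra_simps)
  finally show ?case
    using 3 by (simp add: algebra_simps)
qed auto

lemma degree_chebyshev_T_rec: "degree (chebyshev_T_rec n) = n"
proof -
  have bound: "degree (chebyshev_T_rec n) \<le> n \<and> coeff (chebyshev_T_rec n) n = (if n = 0 then 1 else 2 ^ (n - 1))"
  proof (induction n rule: chebyshev_T_rec.induct)
    case (3 n)
    then show ?case
      by (auto simp: coeff_eq_0 intro!: degree_diff_le le_trans[OF degree_pCons_le])
  qed auto
  then have "n \<le> degree (chebyshev_T_rec n)"
    by (intro le_degree) simp
  with bound show ?thesis
    by simp
qed

lemma chebyshev_T_eq_rec: "chebyshev_T n = chebyshev_T_rec n"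
  unfolding chebyshev_T_def
proof (rule the_equality)
  fix p assume cos_eq: "\<forall>\<theta>::real. poly p (cos \<theta>) = cos (real n * \<theta>)"
  show "p = chebyshev_T_rec n"
  proof (rule poly_eq_if_eq_on_interval[of "-1" 1])
    fix x :: real assume "x \<in> {-1..1}"
    then have "cos (arccos x) = x"
      by simp
    then show "poly p x = poly (chebyshev_T_rec n) x"
      using cos_eq poly_chebyshev_T_rec_cos by metis
  qed simp
qed (simp add: poly_chebyshev_T_rec_cos)

lemma degree_chebyshev_T: "degree (chebyshev_T n) = n"
  by (simp add: chebyshev_T_eq_rec degree_chebyshev_T_rec)

lemma poly_chebyshev_T_le_1:
  assumes "x \<in> {-1..1}"
  shows "poly (chebyshev_T n) x \<le> 1"
proof -
  have "cos (arccos x) = x"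
    using assms by simp
  then show ?thesis
    using poly_chebyshev_T_rec_cos[of n "arccos x"] cos_le_one[of "real n * arccos x"]
    by (simp add: chebyshev_T_eq_rec)
qed

lemma poly_chebyshev_T_cosh: "poly (chebyshev_T n) (cosh t) = cosh (real n * t)"
  by (simp add: chebyshev_T_eq_rec poly_chebyshev_T_rec_cosh)

lemma poly_chebyshev_T_less:
  assumes "n > 0" and "1 < y" and "-1 \<le> x" and "x < y"
  shows "poly (chebyshev_T n) x < poly (chebyshev_T n) y"
proof -
  define s where "s = arcosh y"
  have s: "0 < s" "cosh s = y"
    using assms(2) unfolding s_def by auto
  have Ty: "poly (chebyshev_T n) y = cosh (real n * s)"
    using poly_chebyshev_T_cosh s(2) by metis
  show ?thesis
  proof (cases "x \<le> 1")
    case True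
    have "cosh 0 < cosh (real n * s)"
      using assms(1) s(1) by (subst cosh_real_nonneg_less_iff) auto
    then show ?thesis
      using poly_chebyshev_T_le_1[of x n] True assms(3) Ty by simp
  next
    case False
    define t where "t = arcosh x"
    have t: "0 \<le> t" "cosh t = x"
      using False unfolding t_def by auto
    have "t < s"
      using False assms(4) unfolding t_def s_def by simp
    then have "cosh (real n * t) < cosh (real n * s)"
      using assms(1) t(1) by (subst cosh_real_nonneg_less_iff) auto
    then show ?thesis
      using Ty poly_chebyshev_T_cosh t(2) by metis
  qed
qed

lemma poly_one_minus_divisible_by_x:
  fixes R :: "real poly"
  assumes "poly R 0 = 1" and "degree R = Suc d"
  obtains P where "degree P = d" and "\<And>z. 1 - poly R z = z * poly P z"
proof -
  obtain a P where aP: "1 - R = pCons a P"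
    by (meson pCons_cases)
  have "a = poly (1 - R) 0"
    using aP by simp
  then have "a = 0"
    using assms(1) by simp
  have "degree (1 - R) = Suc d"
    using degree_add_eq_right[of 1 "- R"] assms(2) by simp
  then have "degree P = d"
    using aP by (simp add: \<open>a = 0\<close> degree_pCons_eq_if split: if_splits)
  moreover have "1 - poly R z = z * poly P z" for z
    using arg_cong[OF aP, of "\<lambda>q. poly q z"] \<open>a = 0\<close> by simp
  ultimately show ?thesis
    using that by blast
qed

lemma shifted_chebyshev_residual:
  fixes d :: nat and \<mu> :: real
  assumes "0 < \<mu>" and "\<mu> < 1"
  defines "r \<equiv> \<lambda>z. poly (chebyshev_T (d+1)) ((1 + \<mu> - 2*z) / (1 - \<mu>))
                    / poly (chebyshev_T (d+1)) ((1 + \<mu>) / (1 - \<mu>))"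
  shows "\<exists>P::real poly. degree P = d \<and> (\<forall>z. z \<noteq> 0 \<longrightarrow> poly P z = (1 - r z) / z)
           \<and> (\<forall>z\<in>{0<..1}. poly P z > 0)"
proof -
  define T where "T = chebyshev_T (d+1)"
  define y where "y = (1 + \<mu>) / (1 - \<mu>)"
  have "1 < y"
    using assms(1,2) unfolding y_def by (simp add: field_simps)
  have "1 < poly T y"
    using poly_chebyshev_T_less[of "d+1" y 1] \<open>1 < y\<close> poly_chebyshev_T_cosh[of "d+1" 0]
    unfolding T_def by simp
  define R where "R = smult (1 / poly T y) (T \<circ>\<^sub>p [:y, -2 / (1 - \<mu>):])"
  have poly_R: "poly R z = r z" for z
  proof -
    have "y + z * (-2 / (1 - \<mu>)) = (1 + \<mu> - 2*z) / (1 - \<mu>)"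
      unfolding y_def by (simp add: diff_divide_distrib)
    then show ?thesis
      unfolding R_def r_def T_def y_def by (simp add: poly_pcompose)
  qed
  have "poly R 0 = 1"
    unfolding R_def using \<open>1 < poly T y\<close> by (simp add: poly_pcompose)
  moreover have "degree R = Suc d"
    unfolding R_def using \<open>1 < poly T y\<close> assms(2) by (simp add: degree_pcompose degree_chebyshev_T T_def)
  ultimately obtain P where deg_P: "degree P = d" and P: "\<And>z. 1 - poly R z = z * poly P z"
    using poly_one_minus_divisible_by_x by metis
  have "poly P z > 0" if "z \<in> {0<..1}" for z
  proof -
    have "poly T ((1 + \<mu> - 2*z) / (1 - \<mu>)) < poly T y"
      unfolding T_def using that assms(1,2) \<open>1 < y\<close>
      by (intro poly_chebyshev_T_less) (auto simp: y_def field_simps)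
    then have "r z < 1"
      using \<open>1 < poly T y\<close> unfolding r_def T_def y_def by simp
    then have "0 < z * poly P z"
      using P[of z] poly_R[of z] by simp
    then show ?thesis
      using that by (simp add: zero_less_mult_iff)
  qed
  moreover have "poly P z = (1 - r z) / z" if "z \<noteq> 0" for z
    using P[of z] poly_R[of z] that by (simp add: field_simps)
  ultimately show ?thesis
    using deg_P by blast
qed

subsection \<open>Integrals of polynomials over the unit interval\<close>

definition integral01 :: "real poly \<Rightarrow> real" where
  "integral01 g = integral {0..1} (poly g)"

lemma integrable_poly: "poly (g::real poly) integrable_on {a..b}"
  by (intro integrable_continuous_interval continuous_intros)

lemma integral01_add: "integral01 (f + g) = integral01 f + integral01 g"
proof -
  have "poly (f + g) = (\<lambda>x. poly f x + poly g x)"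
    by (rule ext) simp
  then show ?thesis
    unfolding integral01_def by (simp add: integral_add integrable_poly)
qed

lemma integral01_diff: "integral01 (f - g) = integral01 f - integral01 g"
proof -
  have "poly (f - g) = (\<lambda>x. poly f x - poly g x)"
    by (rule ext) simp
  then show ?thesis
    unfolding integral01_def by (simp add: integral_diff integrable_poly)
qed

lemma integral01_smult: "integral01 (smult c f) = c * integral01 f"
  unfolding integral01_def by (simp add: poly_smult[abs_def])

lemma integral_affine_substitution:
  fixes F :: "real \<Rightarrow> real"
  assumes "continuous_on UNIV F" and "\<beta> > 0"
  shows "integral {0..1} (\<lambda>t. F (\<alpha> + \<beta> * t)) = integral {\<alpha>..\<alpha>+\<beta>} F / \<beta>"
proof -
  have "((\<lambda>t. \<beta> *\<^sub>R F (\<alpha> + \<beta> * t)) has_integral integral {\<alpha> + \<beta> * 0..\<alpha> + \<beta> * 1} F) {0..1}"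
    using assms
    by (intro has_integral_substitution[where c = \<alpha> and d = "\<alpha> + \<beta>"])
       (auto intro!: derivative_eq_intros continuous_on_subset[OF assms(1)] simp: mult_left_le)
  then have "integral {0..1} (\<lambda>t. \<beta> * F (\<alpha> + \<beta> * t)) = integral {\<alpha>..\<alpha>+\<beta>} F"
    by (intro integral_unique) simp
  then show ?thesis
    using assms(2) by (simp add: field_simps)
qed

lemma integral_unit_interval_reflect:
  fixes H :: "real \<Rightarrow> real"
  assumes "continuous_on UNIV H"
  shows "integral {0..1} (\<lambda>t. H (1 - t)) = integral {0..1} H"
proof -
  have "integral {0..1} (\<lambda>t. H (1 - t)) = integral {-1..0} (\<lambda>y. H (1 + y))"
    using Henstock_Kurzweil_Integration.integral_reflect_real[of 0 "-1" "\<lambda>y. H (1 + y)"] by simp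
  also have "\<dots> = integral {0..1} (\<lambda>t. H (1 + (-1 + 1 * t)))"
    using integral_affine_substitution[of "\<lambda>y. H (1 + y)" 1 "-1"]
    by (simp add: continuous_on_compose2[OF assms] continuous_intros)
  finally show ?thesis
    by simp
qed

lemma integral01_pcompose_reflect: "integral01 (g \<circ>\<^sub>p [:1, -1:]) = integral01 g"
proof -
  have "poly (g \<circ>\<^sub>p [:1, -1:]) = (\<lambda>t. poly g (1 - t))"
    by (rule ext) (simp add: poly_pcompose)
  then show ?thesis
    unfolding integral01_def by (simp add: integral_unit_interval_reflect continuous_intros)
qed

text \<open>Both pieces are parametrised so that \<open>t = 0\<close> corresponds to the cut point \<open>c\<close>.\<close>

lemma integral01_split:
  assumes "0 < c" and "c < 1"
  shows "integral01 g = c * integral01 (g \<circ>\<^sub>p [:c, -c:]) + (1 - c) * integral01 (g \<circ>\<^sub>p [:c, 1 - c:])"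
proof -
  have cont: "continuous_on UNIV (poly g)"
    by (intro continuous_intros)
  have "integral01 g = integral {0..c} (poly g) + integral {c..1} (poly g)"
    unfolding integral01_def using assms Henstock_Kurzweil_Integration.integral_combine[of 0 c 1 "poly g"] integrable_poly by simp
  also have "integral {c..1} (poly g) = (1 - c) * integral01 (g \<circ>\<^sub>p [:c, 1 - c:])"
  proof -
    have "poly (g \<circ>\<^sub>p [:c, 1 - c:]) = (\<lambda>t. poly g (c + (1 - c) * t))"
      by (rule ext) (simp add: poly_pcompose algebra_simps)
    then show ?thesis
      using integral_affine_substitution[OF cont, of "1 - c" c] assms by (simp add: integral01_def)
  qed
  also have "integral {0..c} (poly g) = c * integral01 (g \<circ>\<^sub>p [:c, -c:])"
  proof -
    have "integral {0..1} (\<lambda>t. poly g (0 + c * t)) = integral {0..0+c} (poly g) / c"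
      using integral_affine_substitution[OF cont, of c 0] assms by blast
    moreover have "integral {0..1} (\<lambda>t. poly g (c * (1 - t))) = integral {0..1} (\<lambda>s. poly g (c * s))"
      by (rule integral_unit_interval_reflect[of "\<lambda>s. poly g (c * s)"]) (intro continuous_intros)
    moreover have "(\<lambda>t. poly g (c * (1 - t))) = poly (g \<circ>\<^sub>p [:c, -c:])"
      by (rule ext) (simp add: poly_pcompose algebra_simps)
    ultimately show ?thesis
      using assms by (simp add: integral01_def field_simps)
  qed
  finally show ?thesis
    by simp
qed

lemma integral01_square_nonneg: "integral01 (g * g) \<ge> 0"
  unfolding integral01_def by (rule integral_nonneg[OF integrable_poly]) simp

lemma integral01_nonneg_eq_0_imp_0:
  assumes "integral01 g = 0" and "\<And>x. x \<in> {0..1} \<Longrightarrow> 0 \<le> poly g x" and "x \<in> {0..1}"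
  shows "poly g x = 0"
proof -
  have "(poly g has_integral 0) (cbox 0 1)"
    using assms(1) integrable_poly[of g 0 1] unfolding integral01_def
    by (metis cbox_interval has_integral_integrable_integral)
  moreover have "continuous_on {0..1} (poly g)"
    by (intro continuous_intros)
  ultimately show ?thesis
    using has_integral_0_cbox_imp_0[of 0 1 "poly g" x] assms by (auto simp: cbox_interval)
qed

lemma integral01_square_eq_0_iff: "integral01 (g * g) = 0 \<longleftrightarrow> g = 0"
proof
  assume "integral01 (g * g) = 0"
  then have "poly g x = 0" if "x \<in> {0..1}" for x
    using integral01_nonneg_eq_0_imp_0[of "g * g" x] that by simp
  then show "g = 0"
    using poly_eq_if_eq_on_interval[of 0 1 g 0] by simp
qed (simp add: integral01_def poly_0[abs_def])

lemma ls_obj_eq_integral01: "ls_obj q = integral01 ((1 - pCons 0 q) * (1 - pCons 0 q))"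
proof -
  have "(\<lambda>z. (1 - poly q z * z)\<^sup>2) = poly ((1 - pCons 0 q) * (1 - pCons 0 q))"
    by (rule ext) (simp add: power2_eq_square algebra_simps)
  then show ?thesis
    unfolding ls_obj_def integral01_def by simp
qed

subsection \<open>Polynomials of least norm with prescribed value at the origin\<close>

locale least_norm_poly =
  fixes n :: nat and e :: "real poly"
  assumes degree_bound_pos: "0 < n"
    and poly_e_0: "poly e 0 = 1"
    and degree_e: "degree e \<le> n"
    and least_norm: "\<And>g. poly g 0 = 1 \<Longrightarrow> degree g \<le> n \<Longrightarrow> integral01 (e * e) \<le> integral01 (g * g)"
begin

lemma norm_pos: "integral01 (e * e) > 0"
proof -
  have "e \<noteq> 0"
    using poly_e_0 by auto
  then show ?thesis
    using integral01_square_eq_0_iff[of e] integral01_square_nonneg[of e] by linarith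
qed

text \<open>The first variation in the direction \<open>h\<close> vanishes: the quadratic
  \<open>2 s J + s\<^sup>2 M\<close> is non-negative for all \<open>s\<close>, and \<open>s = -J / (M + 1)\<close> turns it into
  \<open>-J\<^sup>2 (M + 2) / (M + 1)\<^sup>2\<close>.\<close>

lemma orthogonal:
  assumes "poly h 0 = 0" and "degree h \<le> n"
  shows "integral01 (e * h) = 0"
proof -
  define J where "J = integral01 (e * h)"
  define M where "M = integral01 (h * h)"
  have "M \<ge> 0"
    unfolding M_def by (rule integral01_square_nonneg)
  have quadratic_nonneg: "0 \<le> 2 * s * J + s^2 * M" for s
  proof -
    have "integral01 (e * e) \<le> integral01 ((e + smult s h) * (e + smult s h))"
      using poly_e_0 assms degree_e
      by (intro least_norm) (auto intro: order_trans[OF degree_add_le] order_trans[OF degree_smult_le])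
    moreover have "(e + smult s h) * (e + smult s h) = e * e + smult (2 * s) (e * h) + smult (s^2) (h * h)"
      by (rule poly_ext) (simp add: algebra_simps power2_eq_square)
    ultimately show ?thesis
      by (simp add: integral01_add integral01_smult J_def M_def)
  qed
  define s where "s = - J / (M + 1)"
  have "s * (M + 1) = - J"
    using \<open>M \<ge> 0\<close> unfolding s_def by (simp add: field_simps)
  have "(2 * s * J + s^2 * M) * (M + 1)^2 = 2 * J * (s * (M + 1)) * (M + 1) + (s * (M + 1))^2 * M"
    by (simp add: power2_eq_square algebra_simps)
  also have "\<dots> = - (J^2 * (M + 2))"
    unfolding \<open>s * (M + 1) = - J\<close> by (simp add: power2_eq_square algebra_simps)
  finally have "(2 * s * J + s^2 * M) * (M + 1)^2 = - (J^2 * (M + 2))" .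
  moreover have "0 \<le> (2 * s * J + s^2 * M) * (M + 1)^2"
    using quadratic_nonneg[of s] by simp
  ultimately have "J^2 * (M + 2) \<le> 0"
    by simp
  then show ?thesis
    using \<open>M \<ge> 0\<close> unfolding J_def by (simp add: mult_le_0_iff)
qed

lemma unique:
  assumes "poly g 0 = 1" and "degree g \<le> n" and "integral01 (g * g) \<le> integral01 (e * e)"
  shows "g = e"
proof -
  define h where "h = g - e"
  have "integral01 (e * h) = 0"
    using assms(1,2) poly_e_0 degree_e unfolding h_def by (intro orthogonal degree_diff_le) simp_all
  moreover have "g * g = e * e + smult 2 (e * h) + h * h"
    unfolding h_def by (rule poly_ext) (simp add: algebra_simps)
  ultimately have "integral01 (g * g) = integral01 (e * e) + integral01 (h * h)"
    by (simp add: integral01_add integral01_smult)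
  then have "integral01 (h * h) = 0"
    using assms(3) integral01_square_nonneg[of h] by linarith
  then show ?thesis
    unfolding h_def integral01_square_eq_0_iff by simp
qed

lemma norm_ge_scaled:
  assumes "poly g 0 = a" and "a \<noteq> 0" and "degree g \<le> n"
  shows "a^2 * integral01 (e * e) \<le> integral01 (g * g)"
proof -
  have "integral01 (e * e) \<le> integral01 (smult (1/a) g * smult (1/a) g)"
    using assms by (intro least_norm) (auto intro: order_trans[OF degree_smult_le])
  also have "smult (1/a) g * smult (1/a) g = smult ((1/a)^2) (g * g)"
    by (simp add: power2_eq_square)
  finally have "integral01 (e * e) \<le> integral01 (g * g) / a^2"
    by (simp add: integral01_smult power_divide)
  then show ?thesis
    using assms(2) by (simp add: pos_le_divide_eq mult.commute)
qed

lemma integral01_eq_norm: "integral01 e = integral01 (e * e)"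
proof -
  have "integral01 (e * (e - 1)) = 0"
    using poly_e_0 degree_e by (intro orthogonal degree_diff_le) simp_all
  then show ?thesis
    by (simp add: algebra_simps integral01_diff)
qed

lemma not_reflection_invariant: "e \<circ>\<^sub>p [:1, -1:] \<noteq> e"
proof
  assume sym: "e \<circ>\<^sub>p [:1, -1:] = e"
  have x_orth: "integral01 (e * [:0, 1:]) = 0"
    using degree_bound_pos by (intro orthogonal) auto
  have "e * [:1, -1:] = (e * [:0, 1:]) \<circ>\<^sub>p [:1, -1:]"
    using sym by (simp add: pcompose_mult pcompose_pCons)
  then have "integral01 (e * [:1, -1:]) = 0"
    using x_orth by (simp add: integral01_pcompose_reflect)
  have "integral01 e = integral01 (e * [:1, -1:] + e * [:0, 1:])"
    by (rule arg_cong[where f = integral01], rule poly_ext) (simp add: algebra_simps)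
  also have "\<dots> = 0"
    unfolding integral01_add using x_orth \<open>integral01 (e * [:1, -1:]) = 0\<close> by simp
  finally show False
    using integral01_eq_norm norm_pos by simp
qed

lemma not_contraction_invariant:
  assumes "0 < z" and "z < 1"
  shows "e \<circ>\<^sub>p [:z, -z:] \<noteq> e"
proof
  assume inv: "e \<circ>\<^sub>p [:z, -z:] = e"
  show False
  proof (cases "degree e = 0")
    case True
    then obtain k where "e = [:k:]"
      by (rule degree_eq_zeroE)
    then have "e = 1"
      using poly_e_0 by (simp add: one_pCons)
    then have "integral01 [:0, 1:] = 0"
      using orthogonal[of "[:0, 1:]"] degree_bound_pos by simp
    then have "poly [:0, 1::real:] 1 = 0"
      by (rule integral01_nonneg_eq_0_imp_0) auto
    then show False
      by simp
  next
    case False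
    have "lead_coeff e = lead_coeff e * (-z) ^ degree e"
      using assms inv lead_coeff_comp[of "[:z, -z:]" e] by simp
    moreover have "lead_coeff e \<noteq> 0"
      using poly_e_0 by auto
    ultimately have "(-z) ^ degree e = 1"
      by simp
    then have "z ^ degree e = 1"
      using power_abs[of "-z" "degree e"] assms(1) by simp
    moreover have "z ^ degree e < 1"
      using assms False by (simp add: power_less_one_iff)
    ultimately show False
      using assms(1) by simp
  qed
qed

lemma poly_less_one:
  assumes "z \<in> {0<..1}"
  shows "poly e z < 1"
proof (rule ccontr)
  assume "\<not> poly e z < 1"
  then have a: "1 \<le> poly e z"
    by simp
  have sq_le_1_imp: "poly e z = 1" if "(poly e z)^2 \<le> 1"
  proof -
    have "poly e z * 1 \<le> poly e z * poly e z"
      using a by (intro mult_left_mono) auto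
    then show ?thesis
      using a that unfolding power2_eq_square by linarith
  qed
  show False
  proof (cases "z = 1")
    case True
    define g where "g = e \<circ>\<^sub>p [:1, -1:]"
    have g_0: "poly g 0 = poly e z" and deg_g: "degree g \<le> n"
      unfolding g_def True using degree_e by (simp_all add: poly_pcompose degree_pcompose)
    have norm_g: "integral01 (g * g) = integral01 (e * e)"
      unfolding g_def pcompose_mult[symmetric] by (rule integral01_pcompose_reflect)
    then have "(poly e z)^2 \<le> 1"
      using norm_ge_scaled[OF g_0 _ deg_g] a norm_pos by simp
    then have "g = e"
      using unique[of g] g_0 deg_g norm_g sq_le_1_imp by simp
    then show False
      using not_reflection_invariant unfolding g_def by simp
  next
    case False
    with assms have z: "0 < z" "z < 1"
      by auto
    define g1 where "g1 = e \<circ>\<^sub>p [:z, -z:]"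
    define g2 where "g2 = e \<circ>\<^sub>p [:z, 1 - z:]"
    have "poly g1 0 = poly e z" "poly g2 0 = poly e z" "degree g1 \<le> n" "degree g2 \<le> n"
      unfolding g1_def g2_def using degree_e by (simp_all add: poly_pcompose degree_pcompose)
    then have ge1: "(poly e z)^2 * integral01 (e * e) \<le> integral01 (g1 * g1)"
      and ge2: "(poly e z)^2 * integral01 (e * e) \<le> integral01 (g2 * g2)"
      using a norm_ge_scaled[of g1 "poly e z"] norm_ge_scaled[of g2 "poly e z"] by auto
    have split: "integral01 (e * e) = z * integral01 (g1 * g1) + (1 - z) * integral01 (g2 * g2)"
      unfolding g1_def g2_def pcompose_mult[symmetric] using z by (rule integral01_split)
    have "(poly e z)^2 * integral01 (e * e) \<le> integral01 (e * e)"
    proof -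
      have "(poly e z)^2 * integral01 (e * e)
          = z * ((poly e z)^2 * integral01 (e * e)) + (1 - z) * ((poly e z)^2 * integral01 (e * e))"
        by (simp add: algebra_simps)
      also have "\<dots> \<le> z * integral01 (g1 * g1) + (1 - z) * integral01 (g2 * g2)"
        using z ge1 ge2 by (intro add_mono mult_left_mono) auto
      finally show ?thesis
        unfolding split .
    qed
    then have "poly e z = 1"
      using norm_pos sq_le_1_imp by simp
    then have "(1 - z) * integral01 (e * e) \<le> (1 - z) * integral01 (g2 * g2)"
      using ge2 z by (intro mult_left_mono) auto
    then have "z * integral01 (g1 * g1) \<le> integral01 (e * e) - (1 - z) * integral01 (e * e)"
      using split by linarith
    then have "z * integral01 (g1 * g1) \<le> z * integral01 (e * e)"
      by (simp add: algebra_simps)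
    then have "integral01 (g1 * g1) \<le> integral01 (e * e)"
      using z by simp
    then have "g1 = e"
      using unique[of g1] \<open>poly g1 0 = poly e z\<close> \<open>degree g1 \<le> n\<close> \<open>poly e z = 1\<close> by simp
    then show False
      using not_contraction_invariant[OF z] unfolding g1_def by simp
  qed
qed

end

lemma least_norm_poly_of_ls_minimizer:
  assumes "degree p \<le> d" and "\<forall>q. degree q \<le> d \<longrightarrow> ls_obj p \<le> ls_obj q"
  shows "least_norm_poly (d + 1) (1 - pCons 0 p)"
proof
  show "0 < d + 1"
    by simp
  show "poly (1 - pCons 0 p) 0 = 1"
    by simp
  show "degree (1 - pCons 0 p) \<le> d + 1"
    using assms(1) by (intro degree_diff_le) auto
  fix g :: "real poly"
  assume g_0: "poly g 0 = 1" and deg_g: "degree g \<le> d + 1"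
  obtain a q where aq: "1 - g = pCons a q"
    by (meson pCons_cases)
  have "a = 0"
    using arg_cong[OF aq, of "\<lambda>f. poly f 0"] g_0 by simp
  then have "g = 1 - pCons 0 q"
    using aq by (simp add: algebra_simps)
  moreover have "degree (1 - g) \<le> d + 1"
    using deg_g by (intro degree_diff_le) simp_all
  then have "degree q \<le> d"
    using aq by (cases "q = 0") auto
  ultimately show "integral01 ((1 - pCons 0 p) * (1 - pCons 0 p)) \<le> integral01 (g * g)"
    using assms(2) ls_obj_eq_integral01 by metis
qed

lemma ls_minimizer_pos:
  assumes "degree p \<le> d" and "\<forall>q. degree q \<le> d \<longrightarrow> ls_obj p \<le> ls_obj q"
  shows "\<forall>z\<in>{0<..1::real}. poly p z > 0"
proof
  fix z :: real assume z: "z \<in> {0<..1}"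
  interpret least_norm_poly "d + 1" "1 - pCons 0 p"
    using assms by (rule least_norm_poly_of_ls_minimizer)
  show "poly p z > 0"
    using poly_less_one[OF z] z by (simp add: zero_less_mult_iff)
qed

theorem mainTheorem6:
  shows "(\<forall>(d::nat) (p::real poly).
            degree p \<le> d \<and> (\<forall>q::real poly. degree q \<le> d \<longrightarrow> ls_obj p \<le> ls_obj q)
            \<longrightarrow> (\<forall>z\<in>{0<..1::real}. poly p z > 0))
       \<and> (\<forall>(d::nat) (\<mu>::real). 0 < \<mu> \<and> \<mu> < 1 \<longrightarrow>
            (let r = (\<lambda>z::real. poly (chebyshev_T (d+1)) ((1 + \<mu> - 2*z) / (1 - \<mu>))
                                / poly (chebyshev_T (d+1)) ((1 + \<mu>) / (1 - \<mu>)))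
             in \<exists>P::real poly. degree P = d
                  \<and> (\<forall>z. z \<noteq> 0 \<longrightarrow> poly P z = (1 - r z) / z)
                  \<and> (\<forall>z\<in>{0<..1::real}. poly P z > 0)))"
proof (intro conjI allI impI)
  fix d p
  assume "degree p \<le> d \<and> (\<forall>q::real poly. degree q \<le> d \<longrightarrow> ls_obj p \<le> ls_obj q)"
  then show "\<forall>z\<in>{0<..1::real}. poly p z > 0"
    using ls_minimizer_pos by blast
next
  fix d and \<mu> :: real
  assume "0 < \<mu> \<and> \<mu> < 1"
  then show "let r = (\<lambda>z::real. poly (chebyshev_T (d+1)) ((1 + \<mu> - 2*z) / (1 - \<mu>))
                                / poly (chebyshev_T (d+1)) ((1 + \<mu>) / (1 - \<mu>)))
             in \<exists>P::real poly. degree P = d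
                  \<and> (\<forall>z. z \<noteq> 0 \<longrightarrow> poly P z = (1 - r z) / z)
                  \<and> (\<forall>z\<in>{0<..1::real}. poly P z > 0)"
    unfolding Let_def by (intro shifted_chebyshev_residual) auto
qed

end
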